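(* In the protocol IT-HS described in the context, with $f<\frac{n}{3}$ Byzantine parties, let $lock>0$ be some nonfaulty party's $lock$ variable and $lock\_val$ its value. If some nonfaulty party has either $prev\_key2\ge lock$, or $key2\ge lock$ and $key2\_val\neq lock\_val$, then there exist $f+1$ nonfaulty parties whose $key1$, $key1\_val$ and $prev\_key1$ fields support opening the pair $(lock,lock\_val)$.
   Context: Model. $n$ parties with inputs $x_i$; up to $f$ Byzantine (arbitrary behaviour), the rest nonfaulty; authenticated point-to-point channels; partial synchrony: after an unknown time GST every message arrives within known $\Delta$ time and clocks are synchronized, before GST delays are arbitrary but finite. Support: fields $(key1,key1\_val,prev\_key1)=(k,w,pk)$ (as carried in a $proof$ message) support opening a pair $(L,V)$ if $L\le pk$, or $L\le k$ and $w\neq V$. Protocol IT-HS (party $i$). Variables: $lock\gets 0$, $lock\_val\gets x_i$; $key3\gets 0$, $key3\_val\gets x_i$; $key2\gets 0$, $key2\_val\gets x_i$, $prev\_key2\gets -1$; $key1\gets 0$, $key1\_val\gets x_i$, $prev\_key1\gets -1$; $view\gets 0$; $highest\_request[j]\gets 0$, $highest\_abort[j]\gets 0$ for $j\in[n]$. "Send-upon-join $m$": for each $j$, send $m$ to $j$ as soon as $highest\_request[j]$ equals the current view. Background: (B1) on $\langle request,v\rangle$ from $j$, $highest\_request[j]\gets\max(highest\_request[j],v)$. (B2) on $\langle done,val\rangle$ from $f+1$ parties with the same $val$: if no $done$ sent yet, send $\langle done,val\rangle$ to all. (B3) on $\langle done,val\rangle$ from $n-f$ parties with the same $val$: decide $val$,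 terminate. (B4) on $\langle abort,v\rangle$ from $j$ with $highest\_abort[j]<v$: $highest\_abort[j]\gets v$; $u\gets$ the $(f+1)$-th largest entry of $highest\_abort$; if $u>highest\_abort[i]$ send $\langle abort,u\rangle$ to all and set $highest\_abort[i]\gets u$; $w\gets$ the $(n-f)$-th largest entry; if $w\ge view$ set $view\gets w+1$. Views: for each value $v$ of $view$, while $view=v$: fresh per-view state; after $11\Delta$ local time send $\langle abort,v\rangle$ to all; ignore other views' messages except $abort$, $done$, $request$; primary $p=(v\bmod n)+1$. View change: send $\langle request,v\rangle$ to all; when $highest\_request[p]=v$ send $\langle suggest,key3,key3\_val,key2,key2\_val,prev\_key2,v\rangle$ to $p$; send-upon-join $\langle proof,key1,key1\_val,prev\_key1,v\rangle$. If $i=p$: upon first $\langle suggest,k3,v3,k2,v2,pk2,v\rangle$ from a party, if $pk2<k2<v$ add $(k2,v2,pk2)$ to $key2\_proofs$; if $k3=0$ add $(k3,v3)$ to $suggestions$; else if $k3<v$ add $(k3,v3)$ as soon as at least $f+1$ triples $(k,w,pk)\in key2\_proofs$ satisfy $k3\le pk$ or ($k3\le k$ and $w=v3$); once $|suggestions|\ge n-f$, send-upon-join $\langle propose,k,w,v\rangle$ for $(k,w)\in suggestions$ with maximal $k$. Message processing: upon first $\langle proof,k1,v1,pk1,v\rangle$ from a party, if $v>k1>pk1$ add $(k1,v1,pk1)$ to $proofs$. Upon first $\langle propose,key,val,v\rangle$ from $p$: if $lock=0$ or $val=lock\_val$, send-upon-join $\langle echo,val,v\rangle$; else if $v>key\ge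 lock$, then once at least $f+1$ triples $(k,w,pk)\in proofs$ satisfy $lock\le pk$ or ($lock\le k$ and $w\ne lock\_val$), send-upon-join $\langle echo,val,v\rangle$. Upon $\langle echo,val,v\rangle$ from $n-f$ parties with the same $val$: send-upon-join $\langle key1,val,v\rangle$; if $key1\_val\ne val$ then $prev\_key1\gets key1$, $key1\_val\gets val$; $key1\gets v$. Upon $\langle key1,val,v\rangle$ from $n-f$ parties (same $val$): send-upon-join $\langle key2,val,v\rangle$; if $key2\_val\ne val$ then $prev\_key2\gets key2$, $key2\_val\gets val$; $key2\gets v$. Upon $\langle key2,val,v\rangle$ from $n-f$ (same $val$): send-upon-join $\langle key3,val,v\rangle$; $key3\gets v$, $key3\_val\gets val$. Upon $\langle key3,val,v\rangle$ from $n-f$ (same $val$): send-upon-join $\langle lock,val,v\rangle$; $lock\gets v$, $lock\_val\gets val$. Upon $\langle lock,val,v\rangle$ from $n-f$ (same $val$): if no $done$ sent yet, send $\langle done,val\rangle$ to all. *)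

theory Defs
  imports Main
begin

text \<open>Parties are 1..n. View numbers and key fields are integers (keys may be -1).\<close>

datatype 'v msg =
    Request int
  | Done 'v
  | Abort int
  | Suggest int 'v int 'v int int   (* key3 key3_val key2 key2_val prev_key2 view *)
  | Proof int 'v int int            (* key1 key1_val prev_key1 view *)
  | Propose int 'v int              (* key val view *)
  | Echo 'v int
  | Key1 'v int
  | Key2 'v int
  | Key3 'v int
  | Lock 'v int

definition parties :: "nat \<Rightarrow> nat set" where
  "parties n = {1..n}"

definition primary :: "nat \<Rightarrow> int \<Rightarrow> nat" where
  "primary n v = nat (v mod int n) + 1"

definition kth_largest :: "nat \<Rightarrow> nat \<Rightarrow> (nat \<Rightarrow> int) \<Rightarrow> int" where
  "kth_largest n k h = rev (sort (map h [1..<n+1])) ! (k - 1)"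

definition supports :: "int \<Rightarrow> 'v \<Rightarrow> int \<Rightarrow> int \<Rightarrow> 'v \<Rightarrow> bool" where
  "supports k w pk L V \<longleftrightarrow> L \<le> pk \<or> (L \<le> k \<and> w \<noteq> V)"

record 'v lst =
  lock :: int
  lock_val :: 'v
  key3 :: int
  key3_val :: 'v
  key2 :: int
  key2_val :: 'v
  prev_key2 :: int
  key1 :: int
  key1_val :: 'v
  prev_key1 :: int
  view :: int
  highest_request :: "nat \<Rightarrow> int"
  highest_abort :: "nat \<Rightarrow> int"
  done_sent :: bool
  decided :: "'v option"
  done_rcv :: "(nat \<times> 'v) set"
  (* per-view state *)
  rcv :: "(nat \<times> 'v msg) set"
  outbox :: "(nat \<times> 'v msg) set"   (* send-upon-join: (recipient, message) *)
  timed_out :: bool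
  key2_proofs :: "(nat \<times> int \<times> 'v \<times> int) set"
  suggestions :: "(nat \<times> int \<times> 'v) set"
  pend_sugg :: "(nat \<times> int \<times> 'v) set"
  proposed :: bool
  proofs :: "(nat \<times> int \<times> 'v \<times> int) set"
  prop_rcvd :: bool
  prop_wait :: "'v option"
  echoed :: bool
  fired :: "(nat \<times> 'v) set"

record 'v gst =
  ls :: "nat \<Rightarrow> 'v lst"
  sent :: "(nat \<times> nat \<times> 'v msg) set"   (* (sender, receiver, message) *)

definition init_lst :: "'v \<Rightarrow> 'v lst" where
  "init_lst x = \<lparr>lock = 0, lock_val = x, key3 = 0, key3_val = x, key2 = 0, key2_val = x,
     prev_key2 = -1, key1 = 0, key1_val = x, prev_key1 = -1, view = 0,
     highest_request = (\<lambda>_. 0), highest_abort = (\<lambda>_. 0), done_sent = False, decided = None,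
     done_rcv = {}, rcv = {}, outbox = {}, timed_out = False, key2_proofs = {},
     suggestions = {}, pend_sugg = {}, proposed = False, proofs = {}, prop_rcvd = False,
     prop_wait = None, echoed = False, fired = {}\<rparr>"

definition to_all :: "nat \<Rightarrow> nat \<Rightarrow> 'v msg \<Rightarrow> (nat \<times> nat \<times> 'v msg) set" where
  "to_all n i m = {(i, k, m) | k. k \<in> parties n}"

definition join_all :: "nat \<Rightarrow> 'v msg \<Rightarrow> (nat \<times> 'v msg) set" where
  "join_all n m = {(k, m) | k. k \<in> parties n}"

text \<open>Local part of entering view v: fresh per-view state; suggest (to the primary) and
  proof (send-upon-join) are scheduled with the current key values.\<close>
definition enter_view :: "nat \<Rightarrow> int \<Rightarrow> 'v lst \<Rightarrow> 'v lst" where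
  "enter_view n v st = st\<lparr>view := v, rcv := {},
     outbox := {(primary n v, Suggest (key3 st) (key3_val st) (key2 st) (key2_val st) (prev_key2 st) v)}
               \<union> join_all n (Proof (key1 st) (key1_val st) (prev_key1 st) v),
     timed_out := False, key2_proofs := {}, suggestions := {}, pend_sugg := {},
     proposed := False, proofs := {}, prop_rcvd := False, prop_wait := None,
     echoed := False, fired := {}\<rparr>"

definition init :: "nat \<Rightarrow> nat set \<Rightarrow> (nat \<Rightarrow> 'v) \<Rightarrow> 'v gst" where
  "init n F x = \<lparr>ls = (\<lambda>i. enter_view n 0 (init_lst (x i))),
                 sent = (\<Union>i \<in> parties n - F. to_all n i (Request 0))\<rparr>"

text \<open>Background rule B4 upon abort v from j (assuming highest_abort[j] < v).\<close>
definition abort_handler :: "nat \<Rightarrow> nat \<Rightarrow> nat \<Rightarrow> nat \<Rightarrow> int \<Rightarrow> 'v lst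
     \<Rightarrow> 'v lst \<times> (nat \<times> nat \<times> 'v msg) set" where
  "abort_handler n f i j v st =
    (let h = (highest_abort st)(j := v);
         u = kth_largest n (f + 1) h;
         h2 = (if u > h i then h(i := u) else h);
         out = (if u > h i then to_all n i (Abort u) else {});
         w = kth_largest n (n - f) h2;
         st1 = st\<lparr>highest_abort := h2\<rparr>
     in if w \<ge> view st1 then (enter_view n (w + 1) st1, out \<union> to_all n i (Request (w + 1)))
        else (st1, out))"

definition upd :: "'v gst \<Rightarrow> nat \<Rightarrow> 'v lst \<Rightarrow> (nat \<times> nat \<times> 'v msg) set \<Rightarrow> 'v gst" where
  "upd s i st M = s\<lparr>ls := (ls s)(i := st), sent := sent s \<union> M\<rparr>"

text \<open>Nonfaulty i can receive m from j if j sent it to i, or if j is Byzantine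
  (Byzantine parties can send anything; channels are authenticated).\<close>
definition can_recv :: "nat \<Rightarrow> nat set \<Rightarrow> 'v gst \<Rightarrow> nat \<Rightarrow> nat \<Rightarrow> 'v msg \<Rightarrow> bool" where
  "can_recv n F s j i m \<longleftrightarrow> j \<in> parties n \<and> ((j, i, m) \<in> sent s \<or> j \<in> F)"

definition cnt :: "nat \<Rightarrow> (nat \<Rightarrow> bool) \<Rightarrow> nat" where
  "cnt n P = card {j \<in> parties n. P j}"

fun is_suggest :: "'v msg \<Rightarrow> bool" where
  "is_suggest (Suggest _ _ _ _ _ _) = True" | "is_suggest _ = False"

fun is_proof :: "'v msg \<Rightarrow> bool" where
  "is_proof (Proof _ _ _ _) = True" | "is_proof _ = False"

inductive step :: "nat \<Rightarrow> nat \<Rightarrow> nat set \<Rightarrow> 'v gst \<Rightarrow> 'v gst \<Rightarrow> bool"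
  for n f F where
  recv_request: "\<lbrakk> i \<in> parties n - F; st = ls s i; decided st = None;
      can_recv n F s j i (Request v) \<rbrakk> \<Longrightarrow>
      step n f F s (upd s i (st\<lparr>highest_request := (highest_request st)(j := max (highest_request st j) v)\<rparr>) {})"
| recv_done: "\<lbrakk> i \<in> parties n - F; st = ls s i; decided st = None;
      can_recv n F s j i (Done val) \<rbrakk> \<Longrightarrow>
      step n f F s (upd s i (st\<lparr>done_rcv := insert (j, val) (done_rcv st)\<rparr>) {})"
| recv_abort: "\<lbrakk> i \<in> parties n - F; st = ls s i; decided st = None;
      can_recv n F s j i (Abort v); highest_abort st j < v;
      abort_handler n f i j v st = (st', M) \<rbrakk> \<Longrightarrow>
      step n f F s (upd s i st' M)"
| recv_suggest: "\<lbrakk> i \<in> parties n - F; st = ls s i; decided st = None;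
      can_recv n F s j i (Suggest k3 v3 k2 v2 pk2 v); v = view st; i = primary n v;
      \<not> (\<exists>m. (j, m) \<in> rcv st \<and> is_suggest m) \<rbrakk> \<Longrightarrow>
      step n f F s (upd s i (st\<lparr>rcv := insert (j, Suggest k3 v3 k2 v2 pk2 v) (rcv st),
         key2_proofs := (if pk2 < k2 \<and> k2 < v then insert (j, k2, v2, pk2) (key2_proofs st) else key2_proofs st),
         suggestions := (if k3 = 0 then insert (j, k3, v3) (suggestions st) else suggestions st),
         pend_sugg := (if k3 \<noteq> 0 \<and> k3 < v then insert (j, k3, v3) (pend_sugg st) else pend_sugg st)\<rparr>) {})"
| recv_proof: "\<lbrakk> i \<in> parties n - F; st = ls s i; decided st = None;
      can_recv n F s j i (Proof k1 v1 pk1 v); v = view st;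
      \<not> (\<exists>m. (j, m) \<in> rcv st \<and> is_proof m) \<rbrakk> \<Longrightarrow>
      step n f F s (upd s i (st\<lparr>rcv := insert (j, Proof k1 v1 pk1 v) (rcv st),
         proofs := (if v > k1 \<and> k1 > pk1 then insert (j, k1, v1, pk1) (proofs st) else proofs st)\<rparr>) {})"
| recv_propose: "\<lbrakk> i \<in> parties n - F; st = ls s i; decided st = None;
      can_recv n F s j i (Propose key val v); v = view st; j = primary n v; \<not> prop_rcvd st \<rbrakk> \<Longrightarrow>
      step n f F s (upd s i
        (if lock st = 0 \<or> val = lock_val st
         then st\<lparr>prop_rcvd := True, echoed := True, outbox := outbox st \<union> join_all n (Echo val v)\<rparr>
         else if v > key \<and> key \<ge> lock st
         then st\<lparr>prop_rcvd := True, prop_wait := Some val\<rparr>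
         else st\<lparr>prop_rcvd := True\<rparr>) {})"
| recv_vote: "\<lbrakk> i \<in> parties n - F; st = ls s i; decided st = None; can_recv n F s j i m;
      m \<in> {Echo val (view st), Key1 val (view st), Key2 val (view st), Key3 val (view st), Lock val (view st)} \<rbrakk> \<Longrightarrow>
      step n f F s (upd s i (st\<lparr>rcv := insert (j, m) (rcv st)\<rparr>) {})"
| echo_wait: "\<lbrakk> i \<in> parties n - F; st = ls s i; decided st = None;
      prop_wait st = Some val; \<not> echoed st;
      card {p \<in> proofs st. case p of (_, k, w, pk) \<Rightarrow> supports k w pk (lock st) (lock_val st)} \<ge> f + 1 \<rbrakk> \<Longrightarrow>
      step n f F s (upd s i (st\<lparr>echoed := True, outbox := outbox st \<union> join_all n (Echo val (view st))\<rparr>) {})"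
| got_echoes: "\<lbrakk> i \<in> parties n - F; st = ls s i; decided st = None; (1, val) \<notin> fired st;
      cnt n (\<lambda>j. (j, Echo val (view st)) \<in> rcv st) \<ge> n - f \<rbrakk> \<Longrightarrow>
      step n f F s (upd s i (st\<lparr>fired := insert (1, val) (fired st),
         outbox := outbox st \<union> join_all n (Key1 val (view st)),
         prev_key1 := (if key1_val st \<noteq> val then key1 st else prev_key1 st),
         key1_val := val, key1 := view st\<rparr>) {})"
| got_key1: "\<lbrakk> i \<in> parties n - F; st = ls s i; decided st = None; (2, val) \<notin> fired st;
      cnt n (\<lambda>j. (j, Key1 val (view st)) \<in> rcv st) \<ge> n - f \<rbrakk> \<Longrightarrow>
      step n f F s (upd s i (st\<lparr>fired := insert (2, val) (fired st),
         outbox := outbox st \<union> join_all n (Key2 val (view st)),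
         prev_key2 := (if key2_val st \<noteq> val then key2 st else prev_key2 st),
         key2_val := val, key2 := view st\<rparr>) {})"
| got_key2: "\<lbrakk> i \<in> parties n - F; st = ls s i; decided st = None; (3, val) \<notin> fired st;
      cnt n (\<lambda>j. (j, Key2 val (view st)) \<in> rcv st) \<ge> n - f \<rbrakk> \<Longrightarrow>
      step n f F s (upd s i (st\<lparr>fired := insert (3, val) (fired st),
         outbox := outbox st \<union> join_all n (Key3 val (view st)),
         key3 := view st, key3_val := val\<rparr>) {})"
| got_key3: "\<lbrakk> i \<in> parties n - F; st = ls s i; decided st = None; (4, val) \<notin> fired st;
      cnt n (\<lambda>j. (j, Key3 val (view st)) \<in> rcv st) \<ge> n - f \<rbrakk> \<Longrightarrow>
      step n f F s (upd s i (st\<lparr>fired := insert (4, val) (fired st),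
         outbox := outbox st \<union> join_all n (Lock val (view st)),
         lock := view st, lock_val := val\<rparr>) {})"
| got_lock: "\<lbrakk> i \<in> parties n - F; st = ls s i; decided st = None; \<not> done_sent st;
      cnt n (\<lambda>j. (j, Lock val (view st)) \<in> rcv st) \<ge> n - f \<rbrakk> \<Longrightarrow>
      step n f F s (upd s i (st\<lparr>done_sent := True\<rparr>) (to_all n i (Done val)))"
| suggest_wait: "\<lbrakk> i \<in> parties n - F; st = ls s i; decided st = None; (j, k3, v3) \<in> pend_sugg st;
      card {t \<in> key2_proofs st. case t of (_, k, w, pk) \<Rightarrow> k3 \<le> pk \<or> (k3 \<le> k \<and> w = v3)} \<ge> f + 1 \<rbrakk> \<Longrightarrow>
      step n f F s (upd s i (st\<lparr>pend_sugg := pend_sugg st - {(j, k3, v3)},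
         suggestions := insert (j, k3, v3) (suggestions st)\<rparr>) {})"
| propose: "\<lbrakk> i \<in> parties n - F; st = ls s i; decided st = None; i = primary n (view st);
      \<not> proposed st; card (suggestions st) \<ge> n - f; (j, k, w) \<in> suggestions st;
      \<forall>(j', k', w') \<in> suggestions st. k' \<le> k \<rbrakk> \<Longrightarrow>
      step n f F s (upd s i (st\<lparr>proposed := True,
         outbox := outbox st \<union> join_all n (Propose k w (view st))\<rparr>) {})"
| done_amplify: "\<lbrakk> i \<in> parties n - F; st = ls s i; decided st = None; \<not> done_sent st;
      cnt n (\<lambda>j. (j, val) \<in> done_rcv st) \<ge> f + 1 \<rbrakk> \<Longrightarrow>
      step n f F s (upd s i (st\<lparr>done_sent := True\<rparr>) (to_all n i (Done val)))"
| decide: "\<lbrakk> i \<in> parties n - F; st = ls s i; decided st = None;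
      cnt n (\<lambda>j. (j, val) \<in> done_rcv st) \<ge> n - f \<rbrakk> \<Longrightarrow>
      step n f F s (upd s i (st\<lparr>decided := Some val\<rparr>) {})"
| timeout: "\<lbrakk> i \<in> parties n - F; st = ls s i; decided st = None; \<not> timed_out st \<rbrakk> \<Longrightarrow>
      step n f F s (upd s i (st\<lparr>timed_out := True\<rparr>) (to_all n i (Abort (view st))))"
| send: "\<lbrakk> i \<in> parties n - F; st = ls s i; decided st = None; (k, m) \<in> outbox st;
      highest_request st k = view st \<rbrakk> \<Longrightarrow>
      step n f F s (upd s i st {(i, k, m)})"

definition reachable :: "nat \<Rightarrow> nat \<Rightarrow> nat set \<Rightarrow> (nat \<Rightarrow> 'v) \<Rightarrow> 'v gst \<Rightarrow> bool" where
  "reachable n f F x s \<longleftrightarrow> (step n f F)\<^sup>*\<^sup>* (init n F x) s"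

end

theory Submission
  imports Defs
begin

text \<open>A nonfaulty party sets key2 to view v with value w only after receiving n - f Key1 votes
  for w in view v. Every nonfaulty voter keeps covering (v, w) afterwards: its key1 never
  decreases, and whenever key1_val changes, prev_key1 takes the old key1, so either key1_val is
  still w or prev_key1 \<open>\<ge> v\<close>. At most f voters are faulty, so f + 1 nonfaulty parties cover
  (v, w), and covering (v, w) with \<open>v \<ge> L\<close> and \<open>w \<noteq> V\<close> supports opening (L, V). This settles
  the case key2 \<open>\<ge> lock\<close>, key2_val \<open>\<noteq> lock_val\<close>. If prev_key2 > 0, key2 once changed its value,
  so two different values are covered at views \<open>\<ge> prev_key2\<close>, and one of them is not lock_val.\<close>

definition key1_covers :: "'v lst \<Rightarrow> int \<Rightarrow> 'v \<Rightarrow> bool" where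
  "key1_covers st v w \<longleftrightarrow> v \<le> key1 st \<and> (key1_val st = w \<or> v \<le> prev_key1 st)"

definition key1_quorum :: "nat \<Rightarrow> nat \<Rightarrow> nat set \<Rightarrow> 'v gst \<Rightarrow> int \<Rightarrow> 'v \<Rightarrow> bool" where
  "key1_quorum n f F s v w \<longleftrightarrow> f + 1 \<le> card {k \<in> parties n - F. key1_covers (ls s k) v w}"

definition local_inv :: "nat \<Rightarrow> nat \<Rightarrow> nat set \<Rightarrow> 'v gst \<Rightarrow> nat \<Rightarrow> 'v lst \<Rightarrow> bool" where
  "local_inv n f F s k st \<longleftrightarrow> key1 st \<le> view st \<and> key2 st \<le> view st
   \<and> (\<forall>r w v. (r, Key1 w v) \<in> outbox st \<longrightarrow> key1_covers st v w)
   \<and> (\<forall>r m. (r, m) \<in> rcv st \<longrightarrow> can_recv n F s r k m)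
   \<and> (0 < key2 st \<longrightarrow> key1_quorum n f F s (key2 st) (key2_val st))
   \<and> (0 < prev_key2 st \<longrightarrow> (\<forall>V. \<exists>v w. prev_key2 st \<le> v \<and> w \<noteq> V \<and> key1_quorum n f F s v w))"

definition protocol_inv :: "nat \<Rightarrow> nat \<Rightarrow> nat set \<Rightarrow> 'v gst \<Rightarrow> bool" where
  "protocol_inv n f F s \<longleftrightarrow> (\<forall>k \<in> parties n - F. local_inv n f F s k (ls s k))
     \<and> (\<forall>k r w v. (k, r, Key1 w v) \<in> sent s \<longrightarrow> k \<in> parties n - F \<longrightarrow> key1_covers (ls s k) v w)"

lemma key1_covers_supports:
  assumes "key1_covers st v w" "L \<le> v" "w \<noteq> V"
  shows "supports (key1 st) (key1_val st) (prev_key1 st) L V"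
  using assms unfolding key1_covers_def supports_def by auto

lemma key1_quorum_supports:
  assumes "key1_quorum n f F s v w" "L \<le> v" "w \<noteq> V"
  shows "\<exists>S \<subseteq> parties n - F. card S = f + 1 \<and>
           (\<forall>k \<in> S. supports (key1 (ls s k)) (key1_val (ls s k)) (prev_key1 (ls s k)) L V)"
proof -
  obtain S where S: "S \<subseteq> {k \<in> parties n - F. key1_covers (ls s k) v w}" "card S = f + 1"
    using assms(1) unfolding key1_quorum_def by (meson obtain_subset_with_card_n)
  then show ?thesis using key1_covers_supports[OF _ assms(2,3)] by blast
qed

lemma key1_quorum_upd:
  assumes "\<And>v w. key1_covers (ls s i) v w \<Longrightarrow> key1_covers st' v w" "key1_quorum n f F s v w"
  shows "key1_quorum n f F (upd s i st' M) v w"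
proof -
  have "{k \<in> parties n - F. key1_covers (ls s k) v w}
          \<subseteq> {k \<in> parties n - F. key1_covers (ls (upd s i st' M) k) v w}"
    using assms(1) by (auto simp: upd_def)
  then have "card {k \<in> parties n - F. key1_covers (ls s k) v w}
               \<le> card {k \<in> parties n - F. key1_covers (ls (upd s i st' M) k) v w}"
    by (rule card_mono[rotated]) (simp add: parties_def)
  then show ?thesis using assms(2) unfolding key1_quorum_def by linarith
qed

lemma can_recv_upd: "can_recv n F s r k m \<Longrightarrow> can_recv n F (upd s i st' M) r k m"
  by (auto simp: can_recv_def upd_def)

lemma local_inv_upd:
  assumes "\<And>v w. key1_covers (ls s i) v w \<Longrightarrow> key1_covers st' v w" "local_inv n f F s k st"
  shows "local_inv n f F (upd s i st' M) k st"
proof -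
  have "key1_quorum n f F (upd s i st' M) v w" if "key1_quorum n f F s v w" for v w
    using key1_quorum_upd[OF assms(1) that] .
  then show ?thesis using assms(2) can_recv_upd unfolding local_inv_def by blast
qed

lemma key1_quorum_of_votes:
  assumes inv: "protocol_inv n f F s" and j: "j \<in> parties n - F"
    and votes: "cnt n (\<lambda>k. (k, Key1 w v) \<in> rcv (ls s j)) \<ge> n - f"
    and "card F \<le> f" "3 * f < n" "F \<subseteq> parties n"
  shows "key1_quorum n f F s v w"
proof -
  let ?A = "{k \<in> parties n. (k, Key1 w v) \<in> rcv (ls s j)}"
  have "?A - F \<subseteq> {k \<in> parties n - F. key1_covers (ls s k) v w}"
  proof
    fix k assume k: "k \<in> ?A - F"
    then have "(k, j, Key1 w v) \<in> sent s"
      using inv j unfolding protocol_inv_def local_inv_def can_recv_def by blast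
    then show "k \<in> {k \<in> parties n - F. key1_covers (ls s k) v w}"
      using inv k unfolding protocol_inv_def by blast
  qed
  then have "card (?A - F) \<le> card {k \<in> parties n - F. key1_covers (ls s k) v w}"
    by (intro card_mono) (simp_all add: parties_def)
  moreover have "card ?A - card F \<le> card (?A - F)"
    using \<open>F \<subseteq> parties n\<close> by (intro diff_card_le_card_Diff) (simp add: finite_subset parties_def)
  moreover have "card ?A \<ge> n - f" using votes by (simp add: cnt_def)
  ultimately show ?thesis unfolding key1_quorum_def using assms(4,5) by linarith
qed

lemma protocol_inv_init: "protocol_inv n f F (init n F x)"
  unfolding protocol_inv_def local_inv_def init_def enter_view_def init_lst_def
  by (auto simp: join_all_def to_all_def)

lemma protocol_inv_upd:
  assumes inv: "protocol_inv n f F s" and i: "i \<in> parties n - F"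
    and covers: "\<And>v w. key1_covers (ls s i) v w \<Longrightarrow> key1_covers st' v w"
    and local: "local_inv n f F (upd s i st' M) i st'"
    and key1_msgs: "\<And>a r w v. (a, r, Key1 w v) \<in> M \<Longrightarrow> a = i \<and> key1_covers st' v w"
  shows "protocol_inv n f F (upd s i st' M)"
proof -
  have ls': "ls (upd s i st' M) = (ls s)(i := st')" by (simp add: upd_def)
  have "local_inv n f F (upd s i st' M) k (ls (upd s i st' M) k)" if k: "k \<in> parties n - F" for k
  proof (cases "k = i")
    case False
    have "local_inv n f F s k (ls s k)" using inv k unfolding protocol_inv_def by blast
    then show ?thesis using local_inv_upd[OF covers] False ls' by simp
  qed (use local ls' in simp)
  moreover have "key1_covers (ls (upd s i st' M) k) v w"
    if sent: "(k, r, Key1 w v) \<in> sent (upd s i st' M)" and k: "k \<in> parties n - F" for k r w v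
  proof (cases "(k, r, Key1 w v) \<in> M")
    case False
    then have "(k, r, Key1 w v) \<in> sent s" using sent by (simp add: upd_def)
    then have "key1_covers (ls s k) v w" using inv k unfolding protocol_inv_def by blast
    then show ?thesis using covers ls' by (cases "k = i") simp_all
  qed (use key1_msgs ls' in simp)
  ultimately show ?thesis unfolding protocol_inv_def by blast
qed

lemma protocol_inv_upd_frame:
  assumes inv: "protocol_inv n f F s" and i: "i \<in> parties n - F"
    and keys: "key1 st' = key1 (ls s i)" "key1_val st' = key1_val (ls s i)"
      "prev_key1 st' = prev_key1 (ls s i)" "key2 st' = key2 (ls s i)"
      "key2_val st' = key2_val (ls s i)" "prev_key2 st' = prev_key2 (ls s i)"
    and "view (ls s i) \<le> view st'"
    and "\<forall>r w v. (r, Key1 w v) \<in> outbox st' \<longrightarrow> (r, Key1 w v) \<in> outbox (ls s i)"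
    and "\<forall>r m. (r, m) \<in> rcv st' \<longrightarrow> (r, m) \<in> rcv (ls s i) \<or> can_recv n F s r i m"
    and "\<forall>a r w v. (a, r, Key1 w v) \<notin> M"
  shows "protocol_inv n f F (upd s i st' M)"
proof (rule protocol_inv_upd[OF inv i])
  show covers: "key1_covers st' v w" if "key1_covers (ls s i) v w" for v w
    using that keys by (simp add: key1_covers_def)
  have old: "local_inv n f F (upd s i st' M) i (ls s i)"
    using inv i local_inv_upd[OF covers] unfolding protocol_inv_def by blast
  have "key1 st' \<le> view st'" "key2 st' \<le> view st'"
    using old assms(9) keys unfolding local_inv_def by auto
  moreover have "key1_covers st' v w" if "(r, Key1 w v) \<in> outbox st'" for r w v
    using old assms(10) that covers unfolding local_inv_def by blast
  moreover have "can_recv n F (upd s i st' M) r i m" if "(r, m) \<in> rcv st'" for r m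
    using old assms(11) that can_recv_upd unfolding local_inv_def by blast
  ultimately show "local_inv n f F (upd s i st' M) i st'"
    using old unfolding local_inv_def keys by blast
qed (use assms(12) in blast)

lemma abort_handler_frame:
  assumes "abort_handler n f i j v st = (st', M)"
  shows "key1 st' = key1 st" "key1_val st' = key1_val st" "prev_key1 st' = prev_key1 st"
    "key2 st' = key2 st" "key2_val st' = key2_val st" "prev_key2 st' = prev_key2 st"
    "view st \<le> view st'" "rcv st' \<subseteq> rcv st"
    "(r, Key1 w u) \<in> outbox st' \<Longrightarrow> (r, Key1 w u) \<in> outbox st" "(a, b, Key1 w u) \<notin> M"
  using assms unfolding abort_handler_def Let_def enter_view_def
  by (auto simp: join_all_def to_all_def split: if_splits)

lemma protocol_inv_set_key1:
  assumes inv: "protocol_inv n f F s" and i: "i \<in> parties n - F" and st: "st = ls s i"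
  shows "protocol_inv n f F (upd s i (st\<lparr>fired := insert (1, val) (fired st),
         outbox := outbox st \<union> join_all n (Key1 val (view st)),
         prev_key1 := (if key1_val st \<noteq> val then key1 st else prev_key1 st),
         key1_val := val, key1 := view st\<rparr>) {})"
    (is "protocol_inv n f F (upd s i ?st' {})")
proof -
  have old: "local_inv n f F s i st" using inv i st by (simp add: protocol_inv_def)
  have covers: "key1_covers ?st' v w" if "key1_covers st v w" for v w
    using that old by (auto simp: key1_covers_def local_inv_def)
  have "local_inv n f F (upd s i ?st' {}) i st"
    using local_inv_upd[of s i ?st'] covers old st by blast
  moreover have "key1_covers ?st' v w" if "(r, Key1 w v) \<in> outbox ?st'" for r w v
  proof (cases "(r, Key1 w v) \<in> outbox st")
    case True
    then show ?thesis using old covers unfolding local_inv_def by blast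
  next
    case False
    then show ?thesis using that by (simp add: join_all_def key1_covers_def)
  qed
  ultimately have local: "local_inv n f F (upd s i ?st' {}) i ?st'"
    unfolding local_inv_def by simp
  show ?thesis
  proof (rule protocol_inv_upd[OF inv i _ local])
    show "key1_covers ?st' v w" if "key1_covers (ls s i) v w" for v w
      using that covers st by simp
  qed simp
qed

lemma protocol_inv_set_key2:
  assumes inv: "protocol_inv n f F s" and i: "i \<in> parties n - F" and st: "st = ls s i"
    and votes: "cnt n (\<lambda>k. (k, Key1 val (view st)) \<in> rcv st) \<ge> n - f"
    and "card F \<le> f" "3 * f < n" "F \<subseteq> parties n"
  shows "protocol_inv n f F (upd s i (st\<lparr>fired := insert (2, val) (fired st),
         outbox := outbox st \<union> join_all n (Key2 val (view st)),
         prev_key2 := (if key2_val st \<noteq> val then key2 st else prev_key2 st),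
         key2_val := val, key2 := view st\<rparr>) {})"
    (is "protocol_inv n f F ?s'" is "protocol_inv n f F (upd s i ?st' {})")
proof -
  have covers: "key1_covers ?st' v w" if "key1_covers (ls s i) v w" for v w
    using that st by (simp add: key1_covers_def)
  have old: "local_inv n f F ?s' i st"
    using inv i st local_inv_upd[OF covers] unfolding protocol_inv_def by blast
  have "key1_quorum n f F s (view st) val"
    using key1_quorum_of_votes[OF inv i _ assms(5-7)] votes st by simp
  then have new_quorum: "key1_quorum n f F ?s' (view st) val"
    using key1_quorum_upd[where M="{}", OF covers] by blast
  have prev_quorums: "\<exists>v w. prev_key2 ?st' \<le> v \<and> w \<noteq> V \<and> key1_quorum n f F ?s' v w"
    if "0 < prev_key2 ?st'" for V
  proof (cases "key2_val st = val")
    case True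
    then show ?thesis using old that unfolding local_inv_def by simp
  next
    case False
    then have prev: "prev_key2 ?st' = key2 st" by simp
    then have "0 < key2 st" using that by simp
    then have old_quorum: "key1_quorum n f F ?s' (key2 st) (key2_val st)"
      using old unfolding local_inv_def by blast
    have "key2 st \<le> view st" using old unfolding local_inv_def by blast
    then show ?thesis
      unfolding prev using old_quorum new_quorum False
      by (cases "key2_val st = V") (metis order_refl)+
  qed
  have local: "local_inv n f F ?s' i ?st'"
    using old new_quorum prev_quorums unfolding local_inv_def
    by (simp add: join_all_def key1_covers_def)
  show ?thesis by (rule protocol_inv_upd[OF inv i _ local]) (use covers in simp_all)
qed

lemma protocol_inv_step:
  assumes "step n f F s s'" and inv: "protocol_inv n f F s"
    and "card F \<le> f" "3 * f < n" "F \<subseteq> parties n"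
  shows "protocol_inv n f F s'"
  using assms(1)
proof (cases rule: step.cases)
  \<comment> \<open>Here and in \<open>propose\<close> the hypothesis \<open>i = primary n (view (ls s i))\<close> makes the
    simplifier loop, so the case facts are passed selectively.\<close>
  case (recv_suggest i st j k3 v3 k2 v2 pk2 v)
  show ?thesis
    unfolding recv_suggest(1) by (rule protocol_inv_upd_frame[OF inv recv_suggest(2)])
      (use recv_suggest(3,5) in \<open>auto simp: join_all_def\<close>)
next
  case (propose i st j k w)
  show ?thesis
    unfolding propose(1) by (rule protocol_inv_upd_frame[OF inv propose(2)])
      (use propose(3) in \<open>auto simp: join_all_def\<close>)
next
  case (recv_abort i st j v st' M)
  show ?thesis
    unfolding recv_abort(1) by (rule protocol_inv_upd_frame[OF inv recv_abort(2)])
      (use abort_handler_frame[OF recv_abort(7)] recv_abort(3) in auto)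
next
  case (send i st k m)
  have old: "local_inv n f F s i st" using inv send by (simp add: protocol_inv_def)
  show ?thesis
    unfolding send(1)
  proof (rule protocol_inv_upd[OF inv send(2)])
    show "local_inv n f F (upd s i st {(i, k, m)}) i st"
      using local_inv_upd old send(3) by blast
    show "a = i \<and> key1_covers st v w" if "(a, r, Key1 w v) \<in> {(i, k, m)}" for a r w v
      using that old send(5) unfolding local_inv_def by blast
  qed (use send(3) in simp)
next
  case (got_echoes i st val)
  show ?thesis
    unfolding got_echoes(1) by (rule protocol_inv_set_key1[OF inv got_echoes(2,3)])
next
  case (got_key1 i st val)
  show ?thesis
    unfolding got_key1(1) by (rule protocol_inv_set_key2[OF inv got_key1(2,3,6) assms(3-5)])
qed (auto intro!: protocol_inv_upd_frame[OF inv] simp: join_all_def to_all_def)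

lemma protocol_inv_reachable:
  assumes "reachable n f F x s" "card F \<le> f" "3 * f < n" "F \<subseteq> parties n"
  shows "protocol_inv n f F s"
proof -
  have "(step n f F)\<^sup>*\<^sup>* (init n F x) s" using assms(1) by (simp add: reachable_def)
  then show ?thesis
  proof (induction rule: rtranclp_induct)
    case base
    show ?case by (rule protocol_inv_init)
  next
    case (step s s')
    then show ?case using protocol_inv_step assms(2-4) by blast
  qed
qed

lemma local_inv_quorum_against:
  assumes local: "local_inv n f F s j st" and "0 < L"
    and "L \<le> prev_key2 st \<or> (L \<le> key2 st \<and> key2_val st \<noteq> V)"
  shows "\<exists>v w. key1_quorum n f F s v w \<and> L \<le> v \<and> w \<noteq> V"
  using assms(3)
proof
  assume prev: "L \<le> prev_key2 st"
  then have "\<forall>V. \<exists>v w. prev_key2 st \<le> v \<and> w \<noteq> V \<and> key1_quorum n f F s v w"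
    using local \<open>0 < L\<close> by (simp add: local_inv_def)
  then obtain v w where "prev_key2 st \<le> v" "w \<noteq> V" "key1_quorum n f F s v w"
    by blast
  moreover have "L \<le> v" using prev \<open>prev_key2 st \<le> v\<close> by linarith
  ultimately show ?thesis by blast
next
  assume key2: "L \<le> key2 st \<and> key2_val st \<noteq> V"
  then have "key1_quorum n f F s (key2 st) (key2_val st)"
    using local \<open>0 < L\<close> by (simp add: local_inv_def)
  then show ?thesis using key2 by blast
qed

theorem lemma2p10:
  fixes n f :: nat and F :: "nat set" and x :: "nat \<Rightarrow> 'v" and s :: "'v gst" and i j :: nat
  assumes "3 * f < n" and "F \<subseteq> parties n" and "card F \<le> f"
    and "reachable n f F x s"
    and "i \<in> parties n - F" and "lock (ls s i) > 0"
    and "j \<in> parties n - F"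
    and "prev_key2 (ls s j) \<ge> lock (ls s i)
         \<or> (key2 (ls s j) \<ge> lock (ls s i) \<and> key2_val (ls s j) \<noteq> lock_val (ls s i))"
  shows "\<exists>S \<subseteq> parties n - F. card S = f + 1 \<and>
           (\<forall>k \<in> S. supports (key1 (ls s k)) (key1_val (ls s k)) (prev_key1 (ls s k))
                              (lock (ls s i)) (lock_val (ls s i)))"
proof -
  have "local_inv n f F s j (ls s j)"
    using protocol_inv_reachable[OF assms(4,3,1,2)] assms(7) unfolding protocol_inv_def by blast
  then obtain v w where "key1_quorum n f F s v w" "lock (ls s i) \<le> v" "w \<noteq> lock_val (ls s i)"
    using local_inv_quorum_against[OF _ assms(6,8)] by blast
  then show ?thesis by (rule key1_quorum_supports)
qed

end
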